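(* Let $(A,\Phi)\in\mathbf{AP}$ and $\tilde A(t,x):=A(t,x)-\frac1T\int_0^TA(s,x)ds$. Suppose there is $\{b_n\}\subset\mathcal S^c$ with $|b_n|\to\infty$ such that: $\partial_tA(\cdot,b_n)\not\equiv0$ for all $n$; $\lim_{n}\varphi(b_n)\big(\int_0^T|\tilde A(t,b_n)|^2dt\big)^{-1}=0$; and $\lim_n\max\{|\nabla\Phi(t,y)|: t\in[0,T], y\in\mathcal S^c, |y|\ge|b_n|-T\}\big(\int_0^T|\tilde A(t,b_n)|^2dt\big)^{-1/2}=0$. Then there exists $q\in\mathcal K_\Lambda$ with $\mathcal I(q)<0$.
   Context: Fix $T>0$ and a compact $\mathcal S\subset\mathbb R^3$ (possibly empty), $\mathcal S^c=\mathbb R^3\setminus\mathcal S$. $\mathcal A$ is the set of $A\in\mathcal C^1(\mathbb R^4;\mathbb R^3)$, $A=A(t,x)$, $T$-periodic in $t$, with $\partial_tA\not\equiv0$ and $\lim_{|x|\to\infty}(|\partial_tA|+|\nabla A|)=0$ uniformly in $t$ ($\nabla$ = spatial derivative). $\mathcal P$ is the set of $\Phi:\mathbb R\times\mathcal S^c\to\mathbb R$ bounded above, $T$-periodic and continuous in $t$, $\Phi(t,\cdot)\in\mathcal C^1(\mathcal S^c)$, $\lim_{|x|\to\infty}|\nabla\Phi(t,x)|=0$ uniformly in $t$, and, if $\mathcal S\ne\emptyset$, for each $x_0\in\partial\mathcal S$, $t_0\in[0,T]$ there are $\varepsilon,r>0$ with $-\Phi(t,x)\ge r/|x-x_0|$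 whenever $|x-x_0|,|t-t_0|<\varepsilon$, $x\in\mathcal S^c$. $\varphi(x)=\int_0^T\Phi(t,x)dt$, normalized so that $\sup_{\mathcal S^c}\varphi=0$. $\mathbf{AP}$ = pairs $(A,\Phi)\in\mathcal A\times\mathcal P$ with $\partial_tA+\nabla\Phi\not\equiv0$. $\mathcal W$ = Lipschitz $T$-periodic $q:\mathbb R\to\mathbb R^3$ with norm $\|q\|_\infty+\|\dot q\|_\infty$; $\mathcal K=\{q\in\mathcal W:\|\dot q\|_\infty\le1\}$; $\Lambda=\{q\in\mathcal W: q(t)\notin\mathcal S\ \forall t\}$; $\mathcal K_\Lambda=\mathcal K\cap\Lambda$. $\mathcal I(q)=\int_0^T(1-\sqrt{1-|\dot q|^2})dt+\int_0^T(\dot q\cdot A(t,q)-\Phi(t,q))dt$ for $q\in\mathcal K_\Lambda$ and $\mathcal I(q)=+\infty$ for $q\in\Lambda\setminus\mathcal K_\Lambda$. *)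

theory Defs
  imports "HOL-Analysis.Analysis"
begin

type_synonym vec3 = "real^3"

definition dtA :: "(real \<Rightarrow> vec3 \<Rightarrow> vec3) \<Rightarrow> real \<Rightarrow> vec3 \<Rightarrow> vec3" where
  "dtA A t x = vector_derivative (\<lambda>s. A s x) (at t)"

definition grad :: "(real \<Rightarrow> vec3 \<Rightarrow> real) \<Rightarrow> real \<Rightarrow> vec3 \<Rightarrow> vec3" where
  "grad Phi t x = (\<chi> i. frechet_derivative (Phi t) (at x) (axis i 1))"

definition classA :: "real \<Rightarrow> (real \<Rightarrow> vec3 \<Rightarrow> vec3) \<Rightarrow> bool" where
  "classA T A \<longleftrightarrow>
     (\<exists>D :: real \<times> vec3 \<Rightarrow> (real \<times> vec3) \<Rightarrow>\<^sub>L vec3.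
         (\<forall>z. ((\<lambda>z. A (fst z) (snd z)) has_derivative blinfun_apply (D z)) (at z))
         \<and> continuous_on UNIV D)
   \<and> (\<forall>t x. A (t + T) x = A t x)
   \<and> (\<exists>t x. dtA A t x \<noteq> 0)
   \<and> (\<forall>e>0. \<exists>R. \<forall>t x. norm x \<ge> R \<longrightarrow>
          norm (dtA A t x) + onorm (frechet_derivative (A t) (at x)) < e)"

definition phi :: "real \<Rightarrow> (real \<Rightarrow> vec3 \<Rightarrow> real) \<Rightarrow> vec3 \<Rightarrow> real" where
  "phi T Phi x = integral {0..T} (\<lambda>t. Phi t x)"

definition classP :: "real \<Rightarrow> vec3 set \<Rightarrow> (real \<Rightarrow> vec3 \<Rightarrow> real) \<Rightarrow> bool" where
  "classP T S Phi \<longleftrightarrow>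
     (\<exists>M. \<forall>t. \<forall>x\<in>-S. Phi t x \<le> M)
   \<and> (\<forall>t. \<forall>x\<in>-S. Phi (t + T) x = Phi t x)
   \<and> (\<forall>x\<in>-S. continuous_on UNIV (\<lambda>t. Phi t x))
   \<and> (\<forall>t. (\<forall>x\<in>-S. Phi t differentiable (at x)) \<and> continuous_on (-S) (grad Phi t))
   \<and> (\<forall>e>0. \<exists>R. \<forall>t. \<forall>x\<in>-S. norm x \<ge> R \<longrightarrow> norm (grad Phi t x) < e)
   \<and> (S \<noteq> {} \<longrightarrow> (\<forall>x0\<in>frontier S. \<forall>t0\<in>{0..T}. \<exists>e>0. \<exists>r>0.
          \<forall>t. \<forall>x\<in>-S. dist x x0 < e \<and> \<bar>t - t0\<bar> < e \<longrightarrow> - Phi t x \<ge> r / dist x x0))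
   \<and> (SUP x\<in>-S. phi T Phi x) = 0"

definition AP :: "real \<Rightarrow> vec3 set \<Rightarrow> (real \<Rightarrow> vec3 \<Rightarrow> vec3) \<Rightarrow> (real \<Rightarrow> vec3 \<Rightarrow> real) \<Rightarrow> bool" where
  "AP T S A Phi \<longleftrightarrow> classA T A \<and> classP T S Phi
     \<and> (\<exists>t. \<exists>x\<in>-S. dtA A t x + grad Phi t x \<noteq> 0)"

definition W :: "real \<Rightarrow> (real \<Rightarrow> vec3) set" where
  "W T = {q. (\<exists>L. L-lipschitz_on UNIV q) \<and> (\<forall>t. q (t + T) = q t)}"

definition K :: "real \<Rightarrow> (real \<Rightarrow> vec3) set" where
  "K T = {q \<in> W T. AE t in lebesgue. q differentiable (at t) \<longrightarrow> norm (vector_derivative q (at t)) \<le> 1}"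

definition Lam :: "real \<Rightarrow> vec3 set \<Rightarrow> (real \<Rightarrow> vec3) set" where
  "Lam T S = {q \<in> W T. \<forall>t. q t \<notin> S}"

definition KLam :: "real \<Rightarrow> vec3 set \<Rightarrow> (real \<Rightarrow> vec3) set" where
  "KLam T S = K T \<inter> Lam T S"

definition action :: "real \<Rightarrow> vec3 set \<Rightarrow> (real \<Rightarrow> vec3 \<Rightarrow> vec3) \<Rightarrow> (real \<Rightarrow> vec3 \<Rightarrow> real)
     \<Rightarrow> (real \<Rightarrow> vec3) \<Rightarrow> ereal" where
  "action T S A Phi q =
     (if q \<in> KLam T S then
        ereal (integral {0..T} (\<lambda>t. 1 - sqrt (1 - (norm (vector_derivative q (at t)))\<^sup>2))
             + integral {0..T} (\<lambda>t. vector_derivative q (at t) \<bullet> A t (q t) - Phi t (q t)))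
      else \<infinity>)"

definition Atil :: "real \<Rightarrow> (real \<Rightarrow> vec3 \<Rightarrow> vec3) \<Rightarrow> real \<Rightarrow> vec3 \<Rightarrow> vec3" where
  "Atil T A t x = A t x - (1 / T) *\<^sub>R integral {0..T} (\<lambda>s. A s x)"

end

(*
  Far out along b n the fields vary slowly in space, so a short loop around x0 = b n
  essentially feels only the oscillating potential u t = Atil T A t x0.  Take q' = - lam u,
  i.e. q t = x0 - lam * (integral of u over [0, t]) with lam = 1 / (2 (1 + T)); q is periodic
  because u has mean zero, and it stays within lam * (integral of |u|) <= T of x0.
  With a = integral of |u|^2, the magnetic term contributes - lam a (the mean of A drops
  out), while the kinetic term (at most lam^2 a) and the error of evaluating A along q
  instead of at x0 (at most lam^2 T a, by Cauchy-Schwarz) together cost at most lam a / 2.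
  What remains are the electric term - phi x0 and the variation of Phi along q, bounded by
  the sup of |grad Phi|; the two limit hypotheses say exactly that these are small
  compared with a.
*)
theory Submission
  imports Defs
begin

section \<open>Periodic functions and primitives\<close>

lemma integrable_continuous_on_UNIV:
  fixes f :: "real \<Rightarrow> 'a::banach"
  shows "continuous_on UNIV f \<Longrightarrow> f integrable_on {a..b}"
  by (rule integrable_continuous_real) (erule continuous_on_subset, simp)

lemma periodic_shift_int:
  fixes f :: "real \<Rightarrow> 'a"
  assumes "\<And>t. f (t + T) = f t"
  shows "f (x + of_int k * T) = f x"
proof (induction k rule: int_induct[where k = 0])
  case (step1 k)
  have "f (x + of_int (k + 1) * T) = f ((x + of_int k * T) + T)" by (simp add: algebra_simps)
  with step1 assms show ?case by simp
next
  case (step2 k)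
  have "f (x + of_int k * T) = f ((x + of_int (k - 1) * T) + T)" by (simp add: algebra_simps)
  with step2 assms show ?case by simp
qed simp

lemma periodic_value_in_period:
  fixes f :: "real \<Rightarrow> 'a"
  assumes "T > 0" "\<And>t. f (t + T) = f t"
  shows "\<exists>s\<in>{0..T}. f t = f s"
proof
  define k where "k = \<lfloor>t / T\<rfloor>"
  show "t - of_int k * T \<in> {0..T}"
    using floor_divide_lower[OF assms(1), of t] floor_divide_upper[OF assms(1), of t]
    unfolding k_def by (auto simp: algebra_simps)
  show "f t = f (t - of_int k * T)"
    using periodic_shift_int[where f = f, OF assms(2), of "t - of_int k * T" k] by simp
qed

text \<open>The signed integral \<open>\<integral>\<^sub>0\<^sup>t u\<close>: for each \<open>t\<close> one of the two intervals is
  degenerate.\<close>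
definition primitive :: "(real \<Rightarrow> 'a::banach) \<Rightarrow> real \<Rightarrow> 'a" where
  "primitive u t = integral {0..t} u - integral {t..0} u"

lemma primitive_eq_integral: "t \<ge> 0 \<Longrightarrow> primitive u t = integral {0..t} u"
  by (cases "t = 0") (auto simp: primitive_def)

lemma primitive_eq_integral_from:
  assumes "continuous_on UNIV u" "a \<le> min 0 t"
  shows "primitive u t = integral {a..t} u - integral {a..0} u"
proof (cases "t \<ge> 0")
  case True
  have "integral {a..0} u + integral {0..t} u = integral {a..t} u"
    using True assms(2)
    by (intro Henstock_Kurzweil_Integration.integral_combine integrable_continuous_on_UNIV assms(1)) auto
  then show ?thesis using True by (simp add: primitive_eq_integral algebra_simps)
next
  case False
  have "integral {a..t} u + integral {t..0} u = integral {a..0} u"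
    using False assms(2)
    by (intro Henstock_Kurzweil_Integration.integral_combine integrable_continuous_on_UNIV assms(1)) auto
  then show ?thesis using False by (simp add: primitive_def algebra_simps)
qed

lemma has_vector_derivative_primitive:
  assumes "continuous_on UNIV u"
  shows "(primitive u has_vector_derivative u t) (at t)"
proof -
  define a where "a = min 0 t - 1"
  have t: "t \<in> {a<..<t + 1}" unfolding a_def by auto
  have "((\<lambda>y. integral {a..y} u) has_vector_derivative u t) (at t within {a..t + 1})"
    using t by (intro integral_has_vector_derivative continuous_on_subset[OF assms]) auto
  then have "((\<lambda>y. integral {a..y} u) has_vector_derivative u t) (at t)"
    using t by (subst (asm) at_within_interior) auto
  then have "((\<lambda>y. integral {a..y} u - integral {a..0} u) has_vector_derivative u t) (at t)"
    using has_vector_derivative_diff[OF _ has_vector_derivative_const] by fastforce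
  then show ?thesis
  proof (rule has_vector_derivative_transform_within_open[where S = "{a<..<t + 1}"])
    show "t \<in> {a<..<t + 1}" by (rule t)
    show "integral {a..y} u - integral {a..0} u = primitive u y" if "y \<in> {a<..<t + 1}" for y
      using that by (intro primitive_eq_integral_from[symmetric] assms) (auto simp: a_def)
  qed simp
qed

lemma primitive_periodic:
  assumes "continuous_on UNIV u" "\<And>t. u (t + T) = u t" "T \<ge> 0" "integral {0..T} u = 0"
  shows "primitive u (t + T) = primitive u t"
proof -
  have "\<exists>c. \<forall>x\<in>UNIV. primitive u (x + T) - primitive u x = c"
  proof (rule has_derivative_zero_constant[OF convex_UNIV])
    fix x :: real
    have "((\<lambda>t. primitive u (t + T)) has_vector_derivative u (x + T)) (at x)"
      using vector_diff_chain_at[of "\<lambda>t. t + T" 1 x "primitive u" "u (x + T)"]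
        has_vector_derivative_primitive[OF assms(1)]
      by (simp add: o_def has_vector_derivative_add_const)
    then have "((\<lambda>t. primitive u (t + T) - primitive u t) has_vector_derivative 0) (at x)"
      using has_vector_derivative_diff[OF _ has_vector_derivative_primitive[OF assms(1)]] assms(2)
      by fastforce
    then show "((\<lambda>t. primitive u (t + T) - primitive u t) has_derivative (\<lambda>h. 0)) (at x within UNIV)"
      by (simp add: has_vector_derivative_def)
  qed
  then obtain c where c: "\<And>x. primitive u (x + T) - primitive u x = c" by blast
  have "c = 0"
    using c[of 0] assms(3,4) by (simp add: primitive_eq_integral)
  then show ?thesis using c[of t] by simp
qed

lemma norm_primitive_le:
  assumes "continuous_on UNIV u" "t \<in> {0..T}"
  shows "norm (primitive u t) \<le> integral {0..T} (\<lambda>s. norm (u s))"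
proof -
  have cnu: "continuous_on UNIV (\<lambda>s. norm (u s))" by (intro continuous_intros assms(1))
  have "norm (primitive u t) \<le> integral {0..t} (\<lambda>s. norm (u s))"
    using assms(2) by (auto simp: primitive_eq_integral intro!: integral_norm_bound_integral integrable_continuous_on_UNIV assms(1) cnu)
  also have "\<dots> \<le> integral {0..T} (\<lambda>s. norm (u s))"
    using assms(2) by (intro integral_subset_le integrable_continuous_on_UNIV cnu) auto
  finally show ?thesis .
qed


lemma lipschitz_on_UNIV_vector_derivative_bound:
  fixes f :: "real \<Rightarrow> 'a::real_normed_vector"
  assumes "\<And>t. (f has_vector_derivative f' t) (at t)" "\<And>t. norm (f' t) \<le> L"
  shows "L-lipschitz_on UNIV f"
proof (rule bounded_derivative_imp_lipschitz[where f' = "\<lambda>t h. h *\<^sub>R f' t"])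
  show "(f has_derivative (\<lambda>h. h *\<^sub>R f' t)) (at t within UNIV)" for t
    using assms(1) by (simp add: has_vector_derivative_def)
  show "onorm (\<lambda>h. h *\<^sub>R f' t) \<le> L" for t
    using assms(2) by (simp add: onorm_scaleR_left[OF bounded_linear_ident] onorm_id)
  show "0 \<le> L" using norm_ge_zero assms(2) order_trans by blast
qed simp

lemma onorm_frechet_derivative_le_grad:
  assumes "Phi t differentiable (at x)"
  shows "onorm (frechet_derivative (Phi t) (at x)) \<le> norm (grad Phi t x)"
proof (rule onorm_le)
  let ?f = "frechet_derivative (Phi t) (at x)"
  have "linear ?f"
    using assms frechet_derivative_works has_derivative_linear by blast
  fix h :: vec3
  have "h = (\<Sum>i\<in>UNIV. h $ i *\<^sub>R axis i 1)"
    using basis_expansion[of h] by (simp add: scalar_mult_eq_scaleR)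
  then have "?f h = ?f (\<Sum>i\<in>UNIV. h $ i *\<^sub>R axis i 1)"
    by (rule arg_cong)
  also have "\<dots> = grad Phi t x \<bullet> h"
    using \<open>linear ?f\<close>
    by (simp add: linear_sum linear_scale o_def grad_def inner_vec_def mult.commute)
  finally show "norm (?f h) \<le> norm (grad Phi t x) * norm h"
    by (simp add: Cauchy_Schwarz_ineq2)
qed

lemma one_minus_sqrt_one_minus_square_le:
  fixes s :: real
  assumes "\<bar>s\<bar> \<le> 1"
  shows "1 - sqrt (1 - s\<^sup>2) \<le> s\<^sup>2"
proof -
  have y: "0 \<le> 1 - s\<^sup>2" "1 - s\<^sup>2 \<le> 1"
    using assms by (auto simp: abs_square_le_1)
  then have "1 - s\<^sup>2 \<le> sqrt (1 - s\<^sup>2)"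
    by (intro real_le_rsqrt) (simp add: power2_eq_square mult_left_le)
  then show ?thesis by simp
qed

lemma integral_kinetic_le:
  fixes v :: "real \<Rightarrow> 'a::real_normed_vector"
  assumes "continuous_on {a..b} v" "\<And>t. norm (v t) \<le> 1"
  shows "integral {a..b} (\<lambda>t. 1 - sqrt (1 - (norm (v t))\<^sup>2)) \<le> integral {a..b} (\<lambda>t. (norm (v t))\<^sup>2)"
  using assms one_minus_sqrt_one_minus_square_le[of "norm (v _)"]
  by (intro integral_le integrable_continuous_real continuous_intros) auto

lemma square_integral_le:
  fixes f :: "real \<Rightarrow> real"
  assumes "continuous_on {a..b} f" "a < b"
  shows "(integral {a..b} f)\<^sup>2 \<le> (b - a) * integral {a..b} (\<lambda>t. (f t)\<^sup>2)"
proof -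
  \<comment> \<open>expand \<open>0 \<le> \<integral> (f - c)\<^sup>2\<close> at the mean value \<open>c\<close> of \<open>f\<close>\<close>
  define I where "I = integral {a..b} f"
  define J where "J = integral {a..b} (\<lambda>t. (f t)\<^sup>2)"
  define c where "c = I / (b - a)"
  have "((\<lambda>t. c\<^sup>2) has_integral c\<^sup>2 * (b - a)) {a..b}"
    using has_integral_const_real[of "c\<^sup>2" a b] assms(2) by (simp add: mult.commute)
  then have "((\<lambda>t. (f t)\<^sup>2 - 2 * c * f t + c\<^sup>2) has_integral J - 2 * c * I + c\<^sup>2 * (b - a)) {a..b}"
    unfolding I_def J_def using assms
    by (intro has_integral_add has_integral_diff has_integral_mult_right integrable_integral
        integrable_continuous_real continuous_intros) auto
  moreover have "(f t)\<^sup>2 - 2 * c * f t + c\<^sup>2 = (f t - c)\<^sup>2" for t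
    by (simp add: power2_diff algebra_simps)
  ultimately have "0 \<le> J - 2 * c * I + c\<^sup>2 * (b - a)"
    by (metis (no_types, lifting) has_integral_nonneg zero_le_power2)
  have cI: "I = c * (b - a)"
    using assms(2) by (simp add: c_def)
  have "(b - a) * J - I\<^sup>2 = (b - a) * (J - 2 * c * I + c\<^sup>2 * (b - a))"
    unfolding cI by (simp add: power2_eq_square algebra_simps)
  also have "\<dots> \<ge> 0"
    using \<open>0 \<le> J - 2 * c * I + c\<^sup>2 * (b - a)\<close> assms(2) by simp
  finally show ?thesis
    unfolding I_def[symmetric] J_def[symmetric] by simp
qed

lemma continuous_on_compose_lipschitz:
  fixes F :: "real \<Rightarrow> 'a::metric_space \<Rightarrow> 'b::real_normed_vector"
  assumes F_cont: "\<And>x. x \<in> C \<Longrightarrow> continuous_on I (\<lambda>t. F t x)"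
    and F_lip: "\<And>t. t \<in> I \<Longrightarrow> L-lipschitz_on C (F t)"
    and q: "continuous_on I q" "q ` I \<subseteq> C"
  shows "continuous_on I (\<lambda>t. F t (q t))"
  unfolding continuous_on_def
proof
  fix s assume s: "s \<in> I"
  have "((\<lambda>t. F t (q t) - F t (q s)) \<longlongrightarrow> 0) (at s within I)"
  proof (rule Lim_null_comparison)
    show "\<forall>\<^sub>F t in at s within I. norm (F t (q t) - F t (q s)) \<le> L * dist (q t) (q s)"
      using F_lip q(2) s
      by (auto simp: eventually_at_filter dist_norm[symmetric] intro!: always_eventually dest: lipschitz_onD)
    have "((\<lambda>t. L * dist (q t) (q s)) \<longlongrightarrow> L * dist (q s) (q s)) (at s within I)"
      using q(1) s by (intro tendsto_intros) (simp add: continuous_on_def)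
    then show "((\<lambda>t. L * dist (q t) (q s)) \<longlongrightarrow> 0) (at s within I)" by simp
  qed
  moreover have "((\<lambda>t. F t (q s)) \<longlongrightarrow> F s (q s)) (at s within I)"
    using F_cont q(2) s by (auto simp: continuous_on_def)
  ultimately have "((\<lambda>t. (F t (q t) - F t (q s)) + F t (q s)) \<longlongrightarrow> 0 + F s (q s)) (at s within I)"
    by (rule tendsto_add)
  then show "((\<lambda>t. F t (q t)) \<longlongrightarrow> F s (q s)) (at s within I)" by simp
qed

lemma continuous_on_potential:
  fixes A :: "real \<Rightarrow> 'a::metric_space \<Rightarrow> 'b::real_inner" and Phi :: "real \<Rightarrow> 'a \<Rightarrow> real"
  assumes A: "continuous_on UNIV (\<lambda>z. A (fst z) (snd z))"
    and v: "continuous_on UNIV v" and q: "continuous_on UNIV q" "q ` I \<subseteq> C"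
    and Phi: "\<And>x. x \<in> C \<Longrightarrow> continuous_on UNIV (\<lambda>t. Phi t x)"
      "\<And>t. t \<in> I \<Longrightarrow> G-lipschitz_on C (Phi t)"
  shows "continuous_on I (\<lambda>t. v t \<bullet> A t (q t) - Phi t (q t))"
proof (rule continuous_on_diff)
  have "continuous_on UNIV (\<lambda>t. (t, q t))"
    by (intro continuous_intros q(1))
  from continuous_on_compose2[OF A this]
  have "continuous_on UNIV (\<lambda>t. A t (q t))"
    by simp
  then have "continuous_on UNIV (\<lambda>t. v t \<bullet> A t (q t))"
    by (intro continuous_intros v)
  then show "continuous_on I (\<lambda>t. v t \<bullet> A t (q t))"
    by (rule continuous_on_subset) simp
  show "continuous_on I (\<lambda>t. Phi t (q t))"
  proof (rule continuous_on_compose_lipschitz[OF _ Phi(2) _ q(2)])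
    show "continuous_on I (\<lambda>t. Phi t x)" if "x \<in> C" for x
      using continuous_on_subset[OF Phi(1)[OF that]] by simp
    show "continuous_on I q"
      using continuous_on_subset[OF q(1)] by simp
  qed
qed

lemma potential_pointwise_le:
  fixes f :: "'a::metric_space \<Rightarrow> 'b::real_inner"
  assumes f: "1-lipschitz_on C f" "f x0 = u + m" and g: "G-lipschitz_on C g"
    and "x0 \<in> C" "y \<in> C" "dist x0 y \<le> r" "0 \<le> lam"
  shows "- (lam *\<^sub>R u) \<bullet> f y - g y
           \<le> - lam * (norm u)\<^sup>2 - lam * (u \<bullet> m) + lam * r * norm u - g x0 + G * r"
proof -
  define d where "d = f y - f x0"
  have "norm d \<le> r"
    using lipschitz_onD[OF f(1) \<open>y \<in> C\<close> \<open>x0 \<in> C\<close>] assms(6)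
    by (simp add: d_def dist_norm dist_commute)
  have "- (lam *\<^sub>R u) \<bullet> f y = - lam * (norm u)\<^sup>2 - lam * (u \<bullet> m) - lam * (u \<bullet> d)"
    unfolding d_def f(2) by (simp add: inner_add_right power2_norm_eq_inner algebra_simps)
  moreover have "- lam * (u \<bullet> d) \<le> lam * \<bar>u \<bullet> d\<bar>"
    using mult_left_mono[OF abs_ge_minus_self \<open>0 \<le> lam\<close>] by simp
  moreover have "\<dots> \<le> lam * (norm u * r)"
    using Cauchy_Schwarz_ineq2[of u d] mult_left_mono[OF \<open>norm d \<le> r\<close> norm_ge_zero[of u]] \<open>0 \<le> lam\<close>
    by (intro mult_left_mono) auto
  moreover have "g x0 - g y \<le> G * dist x0 y"
    using lipschitz_onD[OF g \<open>x0 \<in> C\<close> \<open>y \<in> C\<close>] by (simp add: dist_real_def)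
  moreover have "\<dots> \<le> G * r"
    using assms(6) lipschitz_on_nonneg[OF g] by (rule mult_left_mono)
  ultimately show ?thesis
    by (simp add: algebra_simps)
qed

section \<open>The potentials far from the origin\<close>

lemma classAD:
  assumes "classA T A"
  shows classA_continuous: "continuous_on UNIV (\<lambda>z. A (fst z) (snd z))"
    and classA_periodic: "A (t + T) x = A t x"
    and classA_has_vector_derivative: "((\<lambda>s. A s x) has_vector_derivative dtA A t x) (at t)"
    and classA_has_derivative: "(A t has_derivative frechet_derivative (A t) (at x)) (at x)"
proof -
  obtain D :: "real \<times> vec3 \<Rightarrow> (real \<times> vec3) \<Rightarrow>\<^sub>L vec3" where
    D: "\<And>z. ((\<lambda>z. A (fst z) (snd z)) has_derivative blinfun_apply (D z)) (at z)"
    using assms[unfolded classA_def, THEN conjunct1] by blast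
  show "continuous_on UNIV (\<lambda>z. A (fst z) (snd z))"
    by (intro continuous_at_imp_continuous_on ballI has_derivative_continuous[OF D])
  show "A (t + T) x = A t x"
    using assms[unfolded classA_def, THEN conjunct2, THEN conjunct1] by blast
  have "((\<lambda>s. (s, x)) has_derivative (\<lambda>h. (h, 0))) (at t)"
    by (rule has_derivative_Pair[OF has_derivative_ident has_derivative_const])
  from has_derivative_compose[OF this D]
  have "((\<lambda>s. A s x) has_derivative (\<lambda>h. blinfun_apply (D (t, x)) (h, 0))) (at t)"
    by (simp add: o_def)
  moreover have "(\<lambda>h. blinfun_apply (D (t, x)) (h, 0)) = (\<lambda>h. h *\<^sub>R blinfun_apply (D (t, x)) (1, 0))"
  proof
    show "blinfun_apply (D (t, x)) (h, 0) = h *\<^sub>R blinfun_apply (D (t, x)) (1, 0)" for h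
      using blinfun.scaleR_right[of "D (t, x)" h "(1, 0)"] by simp
  qed
  ultimately have "((\<lambda>s. A s x) has_vector_derivative blinfun_apply (D (t, x)) (1, 0)) (at t)"
    unfolding has_vector_derivative_def by (simp only:)
  then show "((\<lambda>s. A s x) has_vector_derivative dtA A t x) (at t)"
    by (simp add: dtA_def vector_derivative_at)
  have "((\<lambda>y. (t, y)) has_derivative (\<lambda>h. (0, h))) (at x)"
    by (rule has_derivative_Pair[OF has_derivative_const has_derivative_ident])
  from has_derivative_compose[OF this D]
  have "A t differentiable (at x)"
    unfolding differentiable_def o_def by auto
  then show "(A t has_derivative frechet_derivative (A t) (at x)) (at x)"
    by (simp add: frechet_derivative_works)
qed

lemma classA_lipschitz_far:
  assumes "classA T A"
  shows "\<forall>\<^sub>F x in at_infinity. 1-lipschitz_on UNIV (\<lambda>t. A t x) \<and> (\<forall>t. 1-lipschitz_on (cball x r) (A t))"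
proof -
  obtain R where R: "\<And>t x. norm x \<ge> R \<Longrightarrow> norm (dtA A t x) + onorm (frechet_derivative (A t) (at x)) < 1"
    using assms[unfolded classA_def, THEN conjunct2, THEN conjunct2, THEN conjunct2, rule_format, OF zero_less_one]
    by blast
  have onorm_nonneg: "0 \<le> onorm (frechet_derivative (A t) (at x))" for t x
    using classA_has_derivative[OF assms] has_derivative_bounded_linear onorm_pos_le by blast
  have "1-lipschitz_on UNIV (\<lambda>t. A t x) \<and> (\<forall>t. 1-lipschitz_on (cball x r) (A t))"
    if x: "norm x \<ge> R + max 0 r" for x
  proof (intro conjI allI)
    have "norm (dtA A t x) \<le> 1" for t
      using R[of x t] onorm_nonneg[of t x] x max.cobounded1[of 0 r] by linarith
    then show "1-lipschitz_on UNIV (\<lambda>t. A t x)"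
      by (intro lipschitz_on_UNIV_vector_derivative_bound[OF classA_has_vector_derivative[OF assms]])
    fix t
    show "1-lipschitz_on (cball x r) (A t)"
    proof (rule bounded_derivative_imp_lipschitz[where f' = "\<lambda>y. frechet_derivative (A t) (at y)"])
      show "(A t has_derivative frechet_derivative (A t) (at y)) (at y within cball x r)" for y
        by (rule has_derivative_at_withinI[OF classA_has_derivative[OF assms]])
      show "onorm (frechet_derivative (A t) (at y)) \<le> 1" if "y \<in> cball x r" for y
      proof -
        have "norm y \<ge> R"
          using that x norm_triangle_ineq2[of x y] max.cobounded2[of 0 r] by (simp add: dist_norm)
        then show ?thesis using R[of y t] norm_ge_zero[of "dtA A t y"] by linarith
      qed
    qed simp_all
  qed
  then show ?thesis
    unfolding eventually_at_infinity by blast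
qed

lemma bounded_far_cball_disjoint:
  assumes "bounded S"
  shows "\<forall>\<^sub>F x in at_infinity. cball x r \<inter> S = {}"
proof -
  obtain B where B: "\<And>y. y \<in> S \<Longrightarrow> norm y \<le> B"
    using assms unfolding bounded_iff by blast
  have "y \<notin> S" if "norm x \<ge> B + r + 1" "y \<in> cball x r" for x y :: 'a
  proof -
    have "norm x - norm y \<le> r"
      using that(2) norm_triangle_ineq2[of x y] by (simp add: dist_norm)
    then show ?thesis using that(1) B by force
  qed
  then have "cball x r \<inter> S = {}" if "norm x \<ge> B + r + 1" for x
    using that by blast
  then show ?thesis
    unfolding eventually_at_infinity by blast
qed

definition grad_sup :: "real \<Rightarrow> vec3 set \<Rightarrow> (real \<Rightarrow> vec3 \<Rightarrow> real) \<Rightarrow> real \<Rightarrow> real" where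
  "grad_sup T S Phi r = (SUP (t, y)\<in>{(t, y). t \<in> {0..T} \<and> y \<notin> S \<and> norm y \<ge> r}. norm (grad Phi t y))"

lemma classP_continuous_time: "classP T S Phi \<Longrightarrow> x \<notin> S \<Longrightarrow> continuous_on UNIV (\<lambda>t. Phi t x)"
  unfolding classP_def by blast

lemma classP_lipschitz_far:
  assumes "classP T S Phi" "bounded S" "0 \<le> r"
  shows "\<forall>\<^sub>F x in at_infinity.
           \<forall>t\<in>{0..T}. (grad_sup T S Phi (norm x - r))-lipschitz_on (cball x r) (Phi t)"
proof -
  obtain R where R: "\<And>t y. y \<notin> S \<Longrightarrow> norm y \<ge> R \<Longrightarrow> norm (grad Phi t y) < 1"
    using assms(1) unfolding classP_def by (metis ComplI zero_less_one)
  have diff: "\<And>t y. y \<notin> S \<Longrightarrow> Phi t differentiable (at y)"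
    using assms(1) unfolding classP_def by blast
  have lip: "\<forall>t\<in>{0..T}. (grad_sup T S Phi (norm x - r))-lipschitz_on (cball x r) (Phi t)"
    if x: "norm x \<ge> R + r" "cball x r \<inter> S = {}" for x
  proof
    fix t assume t: "t \<in> {0..T}"
    define G where "G = grad_sup T S Phi (norm x - r)"
    have far: "y \<notin> S" "norm y \<ge> norm x - r" if "y \<in> cball x r" for y
      using that x(2) norm_triangle_ineq2[of x y] by (auto simp: dist_norm)
    have "bdd_above ((\<lambda>(t, y). norm (grad Phi t y)) ` {(t, y). t \<in> {0..T} \<and> y \<notin> S \<and> norm y \<ge> norm x - r})"
      using R x(1) by (intro bdd_aboveI[where M = 1]) (force intro: less_imp_le)
    then have grad_le: "norm (grad Phi t y) \<le> G" if "y \<in> cball x r" for y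
      unfolding G_def grad_sup_def using t far[OF that] by (force intro: cSUP_upper2)
    show "G-lipschitz_on (cball x r) (Phi t)"
    proof (rule bounded_derivative_imp_lipschitz[where f' = "\<lambda>y. frechet_derivative (Phi t) (at y)"])
      show "(Phi t has_derivative frechet_derivative (Phi t) (at y)) (at y within cball x r)"
        if "y \<in> cball x r" for y
        using diff[OF far(1)[OF that]] by (simp add: frechet_derivative_works has_derivative_at_withinI)
      show "onorm (frechet_derivative (Phi t) (at y)) \<le> G" if "y \<in> cball x r" for y
        using onorm_frechet_derivative_le_grad[of Phi t y, OF diff[OF far(1)[OF that]]] grad_le[OF that] by linarith
      show "0 \<le> G"
        using order_trans[OF norm_ge_zero grad_le[of x]] assms(3) by simp
    qed simp
  qed
  have "\<forall>\<^sub>F x in at_infinity. norm x \<ge> R + r"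
    unfolding eventually_at_infinity by blast
  then have "\<forall>\<^sub>F x in at_infinity. norm x \<ge> R + r \<and> cball x r \<inter> S = {}"
    using bounded_far_cball_disjoint[OF assms(2), of r] by (rule eventually_conj)
  then show ?thesis
    by (rule eventually_mono) (use lip in blast)
qed

lemma Atil_periodic: "(\<And>t. A (t + T) x = A t x) \<Longrightarrow> Atil T A (t + T) x = Atil T A t x"
  by (simp add: Atil_def)

lemma integral_Atil:
  assumes "T > 0" "(\<lambda>s. A s x) integrable_on {0..T}"
  shows "integral {0..T} (\<lambda>t. Atil T A t x) = 0"
  using assms unfolding Atil_def by (subst integral_diff) auto

lemma norm_Atil_le:
  assumes "T > 0" "L-lipschitz_on {0..T} (\<lambda>s. A s x)" "t \<in> {0..T}"
  shows "norm (Atil T A t x) \<le> L * T"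
proof -
  have cont: "continuous_on {0..T} (\<lambda>s. A s x)"
    using assms(2) by (rule lipschitz_on_continuous_on)
  have "Atil T A t x = (1 / T) *\<^sub>R integral {0..T} (\<lambda>s. A t x - A s x)"
    using assms(1) cont
    by (simp add: Atil_def integral_diff integrable_continuous_real scaleR_diff_right)
  moreover have "norm (integral {0..T} (\<lambda>s. A t x - A s x)) \<le> integral {0..T} (\<lambda>s. L * T)"
  proof (rule integral_norm_bound_integral)
    show "(\<lambda>s. A t x - A s x) integrable_on {0..T}"
      by (intro integrable_continuous_real continuous_intros cont)
    show "norm (A t x - A s x) \<le> L * T" if "s \<in> {0..T}" for s
    proof -
      have "\<bar>t - s\<bar> \<le> T" using assms(3) that by auto
      then have "L * \<bar>t - s\<bar> \<le> L * T"
        using lipschitz_on_nonneg[OF assms(2)] by (rule mult_left_mono)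
      then show ?thesis
        using lipschitz_onD[OF assms(2) assms(3) that] by (simp add: dist_norm dist_real_def)
    qed
  qed auto
  ultimately show ?thesis
    using assms(1) by (simp add: field_simps)
qed

lemma Atil_energy_pos:
  assumes "T > 0" "classA T A" "\<exists>t. dtA A t x \<noteq> 0"
  shows "0 < integral {0..T} (\<lambda>t. (norm (Atil T A t x))\<^sup>2)"
proof (rule ccontr)
  have cont: "continuous_on UNIV (\<lambda>t. A t x)"
    using classA_has_vector_derivative[OF assms(2)]
    by (meson continuous_at_imp_continuous_on has_vector_derivative_continuous)
  have cont2: "continuous_on {0..T} (\<lambda>t. (norm (Atil T A t x))\<^sup>2)"
    unfolding Atil_def by (intro continuous_intros continuous_on_subset[OF cont]) auto
  assume "\<not> 0 < integral {0..T} (\<lambda>t. (norm (Atil T A t x))\<^sup>2)"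
  then have "integral {0..T} (\<lambda>t. (norm (Atil T A t x))\<^sup>2) = 0"
    using integral_nonneg[OF integrable_continuous_real[OF cont2]] by (simp add: order_antisym_conv)
  then have "\<forall>t\<in>{0..T}. Atil T A t x = 0"
    using integral_eq_0_iff[OF cont2 assms(1)] by simp
  then have "Atil T A t x = 0" for t
    using periodic_value_in_period[OF assms(1), of "\<lambda>t. Atil T A t x" t]
      Atil_periodic[where A = A, OF classA_periodic[OF assms(2)]] by auto
  moreover define c where "c = (1 / T) *\<^sub>R integral {0..T} (\<lambda>s. A s x)"
  ultimately have "A s x = c" for s
    unfolding Atil_def c_def[symmetric] by (metis eq_iff_diff_eq_0)
  then have "dtA A t x = 0" for t
    by (simp add: dtA_def)
  with assms(3) show False by blast
qed

lemma Atil_oscillation: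
  assumes T: "T > 0" and A: "classA T A" and lip: "1-lipschitz_on UNIV (\<lambda>t. A t x)"
  shows "continuous_on UNIV (\<lambda>t. Atil T A t x)"
    and "Atil T A (t + T) x = Atil T A t x"
    and "integral {0..T} (\<lambda>t. Atil T A t x) = 0"
    and "norm (Atil T A t x) \<le> T"
proof -
  have cont: "continuous_on UNIV (\<lambda>t. A t x)"
    using lip by (rule lipschitz_on_continuous_on)
  show "continuous_on UNIV (\<lambda>t. Atil T A t x)"
    unfolding Atil_def by (intro continuous_intros cont)
  show periodic: "Atil T A (t + T) x = Atil T A t x" for t
    by (rule Atil_periodic[where A = A, OF classA_periodic[OF A]])
  show "integral {0..T} (\<lambda>t. Atil T A t x) = 0"
    by (intro integral_Atil T integrable_continuous_real continuous_on_subset[OF cont]) simp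
  show "norm (Atil T A t x) \<le> T"
    using periodic_value_in_period[OF T, of "\<lambda>t. Atil T A t x" t] periodic
      norm_Atil_le[where A = A and x = x, OF T lipschitz_on_subset[OF lip subset_UNIV]]
    by force
qed

section \<open>A loop of negative action\<close>

lemma KLamI:
  assumes "T > 0" "\<And>t. (q has_vector_derivative q' t) (at t)" "\<And>t. norm (q' t) \<le> 1"
    and "\<And>t. q (t + T) = q t" "\<And>t. t \<in> {0..T} \<Longrightarrow> q t \<notin> S"
  shows "q \<in> KLam T S"
proof -
  have "1-lipschitz_on UNIV q"
    using assms(2,3) by (rule lipschitz_on_UNIV_vector_derivative_bound)
  moreover have "q t \<notin> S" for t
    using periodic_value_in_period[of T q t] assms(1,4,5) by auto
  moreover have "norm (vector_derivative q (at t)) \<le> 1" for t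
    using vector_derivative_at[OF assms(2)] assms(3) by simp
  ultimately show ?thesis
    using assms(4) unfolding KLam_def K_def Lam_def W_def by auto
qed

lemma test_loop:
  fixes u :: "real \<Rightarrow> vec3"
  assumes T: "T > 0" and lam: "0 \<le> lam" "lam * T \<le> 1 / 2"
    and u: "continuous_on UNIV u" "\<And>t. u (t + T) = u t" "integral {0..T} u = 0"
      "\<And>t. norm (u t) \<le> T"
    and S: "cball x0 T \<inter> S = {}"
  defines "q \<equiv> \<lambda>t. x0 - lam *\<^sub>R primitive u t"
  shows "(q has_vector_derivative - (lam *\<^sub>R u t)) (at t)"
    and "t \<in> {0..T} \<Longrightarrow> q t \<in> cball x0 (lam * integral {0..T} (\<lambda>t. norm (u t)))"
    and "lam * integral {0..T} (\<lambda>t. norm (u t)) \<le> T"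
    and "q \<in> KLam T S"
proof -
  show deriv: "(q has_vector_derivative - (lam *\<^sub>R u t)) (at t)" for t
    unfolding q_def by (auto intro!: derivative_eq_intros has_vector_derivative_primitive u(1))
  show near: "q t \<in> cball x0 (lam * integral {0..T} (\<lambda>t. norm (u t)))" if "t \<in> {0..T}" for t
    using norm_primitive_le[OF u(1) that] lam(1) by (simp add: q_def dist_norm mult_left_mono)
  have "integral {0..T} (\<lambda>t. norm (u t)) \<le> integral {0..T} (\<lambda>t. T)"
    by (intro integral_le integrable_continuous_real continuous_intros
        continuous_on_subset[OF u(1)] u(4)) auto
  then have "lam * integral {0..T} (\<lambda>t. norm (u t)) \<le> lam * T * T"
    using mult_left_mono[OF _ lam(1)] T by (simp add: mult.assoc)
  also have "\<dots> \<le> T"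
    using mult_right_mono[OF lam(2), of T] T by simp
  finally show radius: "lam * integral {0..T} (\<lambda>t. norm (u t)) \<le> T" .
  show "q \<in> KLam T S"
  proof (rule KLamI[OF T deriv])
    show "norm (- (lam *\<^sub>R u t)) \<le> 1" for t
      using mult_left_mono[OF u(4) lam(1), of t] lam by simp
    show "q (t + T) = q t" for t
      using primitive_periodic[OF u(1,2) _ u(3)] T by (simp add: q_def)
    show "q t \<notin> S" if "t \<in> {0..T}" for t
      using near[OF that] subset_cball[OF radius] S by blast
  qed
qed

lemma integral_potential_le:
  fixes u q :: "real \<Rightarrow> vec3"
  assumes T: "T > 0" and lam: "0 \<le> lam"
    and q: "continuous_on UNIV q" "\<And>t. t \<in> {0..T} \<Longrightarrow> q t \<in> cball x0 r"
    and u: "continuous_on UNIV u" "integral {0..T} u = 0"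
    and A: "continuous_on UNIV (\<lambda>z. A (fst z) (snd z))" "\<And>t. A t x0 = u t + m"
      "\<And>t. 1-lipschitz_on (cball x0 r) (A t)"
    and Phi: "\<And>x. x \<in> cball x0 r \<Longrightarrow> continuous_on UNIV (\<lambda>t. Phi t x)"
      "\<And>t. t \<in> {0..T} \<Longrightarrow> G-lipschitz_on (cball x0 r) (Phi t)"
  shows "integral {0..T} (\<lambda>t. - (lam *\<^sub>R u t) \<bullet> A t (q t) - Phi t (q t))
      \<le> - lam * integral {0..T} (\<lambda>t. (norm (u t))\<^sup>2)
        + lam * r * integral {0..T} (\<lambda>t. norm (u t)) - phi T Phi x0 + G * r * T"
proof -
  define bound where "bound t = - lam * (norm (u t))\<^sup>2 - lam * (u t \<bullet> m) + lam * r * norm (u t)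
      - Phi t x0 + G * r" for t
  have x0: "x0 \<in> cball x0 r"
    using q(2)[of 0] T by (auto intro: order_trans[OF zero_le_dist])
  have "continuous_on {0..T} (\<lambda>t. - (lam *\<^sub>R u t) \<bullet> A t (q t) - Phi t (q t))"
    using q(2) by (intro continuous_on_potential[OF A(1) _ q(1) _ Phi] continuous_intros u(1)) auto
  moreover have "- (lam *\<^sub>R u t) \<bullet> A t (q t) - Phi t (q t) \<le> bound t" if "t \<in> {0..T}" for t
    unfolding bound_def
    using potential_pointwise_le[OF A(3) A(2) Phi(2)[OF that] x0 q(2)[OF that] _ lam] q(2)[OF that]
    by simp
  moreover have "(bound has_integral - lam * integral {0..T} (\<lambda>t. (norm (u t))\<^sup>2) - lam * 0
      + lam * r * integral {0..T} (\<lambda>t. norm (u t)) - phi T Phi x0 + G * r * T) {0..T}"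
  proof -
    have "((\<lambda>t. u t \<bullet> m) has_integral 0) {0..T}"
      using integral_component_eq[OF integrable_continuous_on_UNIV[OF u(1), of 0 T], of m] u(2)
        integrable_integral[OF integrable_continuous_on_UNIV[of "\<lambda>t. u t \<bullet> m" 0 T]]
      by (simp add: continuous_intros u(1))
    moreover have "((\<lambda>t. G * r) has_integral G * r * T) {0..T}"
      using has_integral_const_real[of "G * r" 0 T] T by (simp add: mult.commute)
    ultimately show ?thesis
      unfolding bound_def phi_def
      by (intro has_integral_add has_integral_diff has_integral_mult_right integrable_integral
          integrable_continuous_on_UNIV[of "\<lambda>t. (norm (u t))\<^sup>2"]
          integrable_continuous_on_UNIV[of "\<lambda>t. norm (u t)"] integrable_continuous_on_UNIV[OF Phi(1)[OF x0]]
          continuous_intros u(1))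
  qed
  ultimately show ?thesis
    using integral_le[OF integrable_continuous_real has_integral_integrable] integral_unique
    by (metis (no_types, lifting) diff_zero mult_zero_right)
qed

lemma action_le:
  fixes u q :: "real \<Rightarrow> vec3"
  assumes T: "T > 0" and lam: "0 \<le> lam"
    and q: "q \<in> KLam T S" "\<And>t. (q has_vector_derivative - (lam *\<^sub>R u t)) (at t)"
      "\<And>t. t \<in> {0..T} \<Longrightarrow> q t \<in> cball x0 r"
    and u: "continuous_on UNIV u" "integral {0..T} u = 0" "\<And>t. lam * norm (u t) \<le> 1"
    and A: "continuous_on UNIV (\<lambda>z. A (fst z) (snd z))" "\<And>t. A t x0 = u t + m"
      "\<And>t. 1-lipschitz_on (cball x0 r) (A t)"
    and Phi: "\<And>x. x \<in> cball x0 r \<Longrightarrow> continuous_on UNIV (\<lambda>t. Phi t x)"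
      "\<And>t. t \<in> {0..T} \<Longrightarrow> G-lipschitz_on (cball x0 r) (Phi t)"
  shows "action T S A Phi q \<le> ereal (lam\<^sup>2 * integral {0..T} (\<lambda>t. (norm (u t))\<^sup>2)
           - lam * integral {0..T} (\<lambda>t. (norm (u t))\<^sup>2)
           + lam * r * integral {0..T} (\<lambda>t. norm (u t)) - phi T Phi x0 + G * r * T)"
proof -
  have q_cont: "continuous_on UNIV q"
    using q(2) by (meson continuous_at_imp_continuous_on has_vector_derivative_continuous)
  have "integral {0..T} (\<lambda>t. 1 - sqrt (1 - (norm (- (lam *\<^sub>R u t)))\<^sup>2))
      \<le> integral {0..T} (\<lambda>t. (norm (- (lam *\<^sub>R u t)))\<^sup>2)"
    using u(3) lam by (intro integral_kinetic_le continuous_intros continuous_on_subset[OF u(1)]) auto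
  also have "\<dots> = lam\<^sup>2 * integral {0..T} (\<lambda>t. (norm (u t))\<^sup>2)"
    using lam by (simp add: power_mult_distrib)
  moreover note integral_potential_le[OF T lam q_cont q(3) u(1,2) A Phi]
  moreover have "action T S A Phi q = ereal (integral {0..T} (\<lambda>t. 1 - sqrt (1 - (norm (- (lam *\<^sub>R u t)))\<^sup>2))
      + integral {0..T} (\<lambda>t. - (lam *\<^sub>R u t) \<bullet> A t (q t) - Phi t (q t)))"
    using q(1) vector_derivative_at[OF q(2)] unfolding action_def by simp
  ultimately show ?thesis
    by simp
qed

lemma negative_action_arith:
  fixes a T W G phi :: real
  assumes a: "0 < a" and T: "0 < T" and W: "0 \<le> W" "W\<^sup>2 \<le> T * a"
    and G: "G / sqrt a < 1 / (4 * T * sqrt T)" and phi: "- 1 / (8 * (1 + T)) < phi / a"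
  defines "lam \<equiv> 1 / (2 * (1 + T))"
  shows "lam\<^sup>2 * a - lam * a + lam * (lam * W) * W - phi + G * (lam * W) * T < 0"
proof -
  have lam: "0 < lam" "lam * (1 + T) = 1 / 2"
    using T by (auto simp: lam_def)
  have "lam\<^sup>2 * a + lam * (lam * W) * W \<le> lam\<^sup>2 * (a * (1 + T))"
    using W(2) lam(1) by (simp add: power2_eq_square algebra_simps mult_left_mono)
  also have "\<dots> = lam * a * (lam * (1 + T))"
    by (simp add: power2_eq_square algebra_simps)
  also have "\<dots> = lam * a / 2"
    unfolding lam(2) by simp
  finally have kinetic: "lam\<^sup>2 * a + lam * (lam * W) * W \<le> lam * a / 2" .
  have "G * W * T \<le> a / 4"
  proof (cases "G \<le> 0")
    case True
    then have "G * W * T \<le> 0"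
      using W(1) T by (simp add: mult_nonpos_nonneg)
    then show ?thesis using a by simp
  next
    case False
    have "W \<le> sqrt a * sqrt T"
      using real_le_rsqrt[OF W(2)] by (simp add: real_sqrt_mult mult.commute)
    moreover have "G \<le> sqrt a / (4 * T * sqrt T)"
      using G a T by (simp add: field_simps)
    ultimately have "G * W * T \<le> (sqrt a / (4 * T * sqrt T)) * (sqrt a * sqrt T) * T"
      using False W(1) T by (intro mult_right_mono mult_mono) auto
    also have "\<dots> = a / 4"
      using a T by (simp add: field_simps)
    finally show ?thesis .
  qed
  then have potential: "G * (lam * W) * T \<le> lam * a / 4"
    using mult_left_mono[of "G * W * T" "a / 4" lam] lam(1) by (simp add: algebra_simps)
  have "- phi < lam * a / 4"
    using phi a T by (simp add: lam_def field_simps)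
  with kinetic potential show ?thesis by linarith
qed

lemma negative_action_near_point:
  assumes T: "T > 0" and A: "classA T A" and P: "classP T S Phi"
    and A_time: "1-lipschitz_on UNIV (\<lambda>t. A t x0)"
    and A_space: "\<forall>t. 1-lipschitz_on (cball x0 T) (A t)"
    and Phi_space: "\<forall>t\<in>{0..T}. G-lipschitz_on (cball x0 T) (Phi t)"
    and S_far: "cball x0 T \<inter> S = {}"
    and nonconst: "\<exists>t. dtA A t x0 \<noteq> 0"
    and phi_small: "- 1 / (8 * (1 + T)) < phi T Phi x0 / integral {0..T} (\<lambda>t. (norm (Atil T A t x0))\<^sup>2)"
    and G_small: "G / sqrt (integral {0..T} (\<lambda>t. (norm (Atil T A t x0))\<^sup>2)) < 1 / (4 * T * sqrt T)"
  shows "\<exists>q\<in>KLam T S. action T S A Phi q < 0"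
proof -
  define lam :: real where "lam = 1 / (2 * (1 + T))"
  define m where "m = (1 / T) *\<^sub>R integral {0..T} (\<lambda>s. A s x0)"
  define u where "u t = Atil T A t x0" for t
  define a where "a = integral {0..T} (\<lambda>t. (norm (u t))\<^sup>2)"
  define W where "W = integral {0..T} (\<lambda>t. norm (u t))"
  define q where "q = (\<lambda>t. x0 - lam *\<^sub>R primitive u t)"
  note u = Atil_oscillation[OF T A A_time, folded u_def]
  have lam: "0 \<le> lam" "lam * T \<le> 1 / 2"
    using T by (auto simp: lam_def field_simps)
  have a: "0 < a"
    unfolding a_def u_def by (rule Atil_energy_pos[OF T A nonconst])
  have W: "0 \<le> W" "W\<^sup>2 \<le> T * a"
  proof -
    have cont: "continuous_on {0..T} (\<lambda>t. norm (u t))"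
      by (intro continuous_intros continuous_on_subset[OF u(1)]) simp
    show "0 \<le> W"
      unfolding W_def by (intro integral_nonneg integrable_continuous_real cont) simp
    show "W\<^sup>2 \<le> T * a"
      using square_integral_le[OF cont T] unfolding W_def a_def by simp
  qed
  note loop = test_loop[OF T lam u S_far, folded W_def q_def]
  have q_near: "q t \<in> cball x0 (lam * W)" if "t \<in> {0..T}" for t
    using loop(2)[OF that] by (simp add: q_def)
  have near_T: "cball x0 (lam * W) \<subseteq> cball x0 T"
    using loop(3) by (rule subset_cball)
  have "action T S A Phi q
      \<le> ereal (lam\<^sup>2 * a - lam * a + lam * (lam * W) * W - phi T Phi x0 + G * (lam * W) * T)"
  proof -
    have "lam * norm (u t) \<le> 1" for t
      using mult_left_mono[OF u(4) lam(1), of t] lam(2) by linarith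
    moreover have "A t x0 = u t + m" for t
      by (simp add: u_def m_def Atil_def)
    moreover have "1-lipschitz_on (cball x0 (lam * W)) (A t)" for t
      using A_space lipschitz_on_subset near_T by blast
    moreover have "continuous_on UNIV (\<lambda>t. Phi t x)" if "x \<in> cball x0 (lam * W)" for x
      using classP_continuous_time[OF P] that near_T S_far by blast
    moreover have "G-lipschitz_on (cball x0 (lam * W)) (Phi t)" if "t \<in> {0..T}" for t
      using Phi_space that lipschitz_on_subset near_T by blast
    ultimately show ?thesis
      using action_le[OF T lam(1) loop(4,1) q_near u(1,3) _ classA_continuous[OF A]]
      unfolding a_def W_def by blast
  qed
  moreover have "lam\<^sup>2 * a - lam * a + lam * (lam * W) * W - phi T Phi x0 + G * (lam * W) * T < 0"
    using negative_action_arith[OF a T W] phi_small G_small unfolding lam_def a_def u_def by blast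
  ultimately show ?thesis
    using loop(4) by (metis ereal_less(1) order.strict_trans1 zero_ereal_def)
qed

theorem mainTheorem12:
  fixes T :: real and S :: "vec3 set"
    and A :: "real \<Rightarrow> vec3 \<Rightarrow> vec3" and Phi :: "real \<Rightarrow> vec3 \<Rightarrow> real"
    and b :: "nat \<Rightarrow> vec3"
  assumes "T > 0" and "compact S"
    and "AP T S A Phi"
    and "\<forall>n. b n \<notin> S"
    and "filterlim (\<lambda>n. norm (b n)) at_top sequentially"
    and "\<forall>n. \<exists>t. dtA A t (b n) \<noteq> 0"
    and "(\<lambda>n. phi T Phi (b n) / integral {0..T} (\<lambda>t. (norm (Atil T A t (b n)))\<^sup>2))
           \<longlonglongrightarrow> 0"
    and "(\<lambda>n. (SUP (t, y)\<in>{(t, y). t \<in> {0..T} \<and> y \<notin> S \<and> norm y \<ge> norm (b n) - T}.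
                 norm (grad Phi t y))
             / sqrt (integral {0..T} (\<lambda>t. (norm (Atil T A t (b n)))\<^sup>2)))
           \<longlonglongrightarrow> 0"
  shows "\<exists>q\<in>KLam T S. action T S A Phi q < 0"
proof -
  have A: "classA T A" and P: "classP T S Phi"
    using assms(3) unfolding AP_def by auto
  have S: "bounded S"
    using assms(2) by (rule compact_imp_bounded)
  have b: "filterlim b at_infinity sequentially"
    using assms(5) by (simp add: filterlim_at_infinity_conv_norm_at_top)
  have "- 1 / (8 * (1 + T)) < 0" "0 < 1 / (4 * T * sqrt T)"
    using assms(1) by simp_all
  note phi_small = order_tendstoD(1)[OF assms(7) this(1)]
    and grad_small = order_tendstoD(2)[OF assms(8)[folded grad_sup_def] this(2)]
  have "\<forall>\<^sub>F n in sequentially. \<exists>q\<in>KLam T S. action T S A Phi q < 0"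
    using eventually_compose_filterlim[OF classA_lipschitz_far[OF A, where r = T] b]
      eventually_compose_filterlim[OF classP_lipschitz_far[OF P S less_imp_le[OF assms(1)]] b]
      eventually_compose_filterlim[OF bounded_far_cball_disjoint[OF S, where r = T] b]
      phi_small grad_small
  proof eventually_elim
    case (elim n)
    then show ?case
      using negative_action_near_point[OF assms(1) A P] assms(6) by blast
  qed
  then show ?thesis
    using eventually_happens'[OF sequentially_bot] by blast
qed

end
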